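(* Let $p>0$ and let $u\in\mathcal{L}(\ell_p;\ell_p)$ with $u\neq0$. Let $(\mathbb{N}_k)_{k=1}^\infty$ be a partition of $\mathbb{N}$ into infinite pairwise disjoint subsets, $\mathbb{N}_k=\{n^{(k)}_1<n^{(k)}_2<\cdots\}$, and for each $k$ define $u_k\in\mathcal{L}(\ell_p;\ell_p)$ by $u_k(x)_{n^{(k)}_i}=u(x)_i$ for all $i\in\mathbb{N}$ and $u_k(x)_m=0$ for $m\notin\mathbb{N}_k$. Then the map $T:\ell_p\to\mathcal{L}(\ell_p;\ell_p)$ given by $T((a_k)_{k=1}^\infty)=\sum_{k=1}^\infty a_k u_k$ is well defined, linear and injective.
   Context: For $0<p<1$, $\ell_p$ is the $p$-Banach space of scalar sequences with $\|x\|_p=(\sum_k|x_k|^p)^{1/p}<\infty$; for $p\ge1$ it is the usual Banach space. $\mathcal{L}(\ell_p;\ell_p)$ is the space of bounded linear operators on $\ell_p$ with the operator (quasi-)norm, and the series defining $T$ is understood as convergent in this (quasi-)norm. *)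

theory Defs
  imports "HOL-Analysis.Analysis" "HOL-Library.Infinite_Set"
begin

text \<open>Sequences are indexed by nat (starting at 0); scalars range over an arbitrary
 real normed field (covers both the real and the complex case).\<close>

definition lp_space :: "real \<Rightarrow> (nat \<Rightarrow> 'a::real_normed_field) set" where
  "lp_space p = {x. summable (\<lambda>k. norm (x k) powr p)}"

definition lp_norm :: "real \<Rightarrow> (nat \<Rightarrow> 'a::real_normed_field) \<Rightarrow> real" where
  "lp_norm p x = (\<Sum>k. norm (x k) powr p) powr (1 / p)"

text \<open>Bounded linear operator on l_p (only its behaviour on l_p matters).\<close>
definition bounded_lp_op :: "real \<Rightarrow> ((nat \<Rightarrow> 'a::real_normed_field) \<Rightarrow> (nat \<Rightarrow> 'a)) \<Rightarrow> bool" where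
  "bounded_lp_op p u \<longleftrightarrow>
     (\<forall>x \<in> lp_space p. u x \<in> lp_space p) \<and>
     (\<forall>x \<in> lp_space p. \<forall>y \<in> lp_space p. u (\<lambda>i. x i + y i) = (\<lambda>i. u x i + u y i)) \<and>
     (\<forall>x \<in> lp_space p. \<forall>c. u (\<lambda>i. c * x i) = (\<lambda>i. c * u x i)) \<and>
     (\<exists>C. \<forall>x \<in> lp_space p. lp_norm p (u x) \<le> C * lp_norm p x)"

definition lp_op_norm :: "real \<Rightarrow> ((nat \<Rightarrow> 'a::real_normed_field) \<Rightarrow> (nat \<Rightarrow> 'a)) \<Rightarrow> real" where
  "lp_op_norm p u = Sup ((\<lambda>x. lp_norm p (u x)) ` {x \<in> lp_space p. lp_norm p x \<le> 1})"

definition op_series_sums :: "real \<Rightarrow> (nat \<Rightarrow> 'a::real_normed_field)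
     \<Rightarrow> (nat \<Rightarrow> (nat \<Rightarrow> 'a) \<Rightarrow> (nat \<Rightarrow> 'a)) \<Rightarrow> ((nat \<Rightarrow> 'a) \<Rightarrow> (nat \<Rightarrow> 'a)) \<Rightarrow> bool" where
  "op_series_sums p a v S \<longleftrightarrow> bounded_lp_op p S \<and>
     (\<lambda>n. lp_op_norm p (\<lambda>x. \<lambda>i. S x i - (\<Sum>k<n. a k * v k x i))) \<longlonglongrightarrow> 0"

end

theory Submission
  imports Defs
begin

(* Since the u_k live on the disjoint blocks N_k, the candidate sum T(a) = \<Sum>_k a_k u_k is the
   operator placing a_k u(x) on block k; reindexing \<nat> injectively into \<nat> \<times> \<nat> bounds
   its p-th quasi-norm power by \<parallel>a\<parallel>^p \<parallel>u x\<parallel>^p.  Applied to the tails of a, this makes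
   the remainders of the series tend to 0 in operator quasi-norm.  Operator-norm convergence
   implies coordinatewise convergence, which gives uniqueness and linearity of the sum, and
   reading off the coordinate n_i^(k) of T(a)(x) returns a_k u(x)_i, which gives injectivity. *)

lemma powr_add_le_two_powr:
  fixes A B q :: real
  assumes "A \<ge> 0" "B \<ge> 0" "q > 0"
  shows "(A + B) powr q \<le> 2 powr q * (A powr q + B powr q)"
proof -
  have "(A + B) powr q \<le> (2 * max A B) powr q"
    using assms by (intro powr_mono2) auto
  also have "\<dots> = 2 powr q * max A B powr q"
    using assms by (simp add: powr_mult)
  also have "max A B powr q \<le> A powr q + B powr q"
    by (cases "A \<le> B") (auto simp: max_def)
  hence "2 powr q * max A B powr q \<le> 2 powr q * (A powr q + B powr q)"
    by (intro mult_left_mono) auto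
  finally show ?thesis .
qed

lemma lp_spaceD: "x \<in> lp_space p \<Longrightarrow> summable (\<lambda>k. norm (x k) powr p)"
  by (simp add: lp_space_def)

lemma lp_norm_nonneg: "lp_norm p x \<ge> 0"
  by (simp add: lp_norm_def)

lemma lp_powr_sum_nonneg: "x \<in> lp_space p \<Longrightarrow> (\<Sum>k. norm (x k) powr p) \<ge> 0"
  by (auto intro!: suminf_nonneg dest: lp_spaceD)

lemma lp_norm_powr:
  assumes "p > 0" "x \<in> lp_space p"
  shows "lp_norm p x powr p = (\<Sum>k. norm (x k) powr p)"
  using assms lp_powr_sum_nonneg[of x p] by (simp add: lp_norm_def powr_powr)

lemma lp_norm_le_if_powr_sum_le:
  assumes "p > 0" "x \<in> lp_space p" "B \<ge> 0" "(\<Sum>k. norm (x k) powr p) \<le> B powr p"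
  shows "lp_norm p x \<le> B"
proof -
  have "lp_norm p x \<le> (B powr p) powr (1 / p)"
    unfolding lp_norm_def using assms lp_powr_sum_nonneg[of x p] by (intro powr_mono2) auto
  thus ?thesis using assms by (simp add: powr_powr)
qed

lemma zero_in_lp_space: "(\<lambda>_. 0) \<in> lp_space p"
  by (simp add: lp_space_def)

lemma lp_norm_zero: "lp_norm p (\<lambda>_. 0) = 0"
  by (simp add: lp_norm_def)

lemma norm_le_lp_norm:
  assumes "p > 0" "x \<in> lp_space p"
  shows "norm (x m) \<le> lp_norm p x"
proof -
  have "norm (x m) powr p \<le> (\<Sum>k. norm (x k) powr p)"
    using sum_le_suminf[OF lp_spaceD[OF assms(2)], of "{m}"] by simp
  hence "(norm (x m) powr p) powr (1 / p) \<le> lp_norm p x"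
    unfolding lp_norm_def using assms by (intro powr_mono2) auto
  thus ?thesis using assms by (simp add: powr_powr)
qed

lemma lp_norm_eq_0_imp_zero:
  assumes "p > 0" "x \<in> lp_space p" "lp_norm p x = 0"
  shows "x = (\<lambda>_. 0)"
  using norm_le_lp_norm[OF assms(1,2)] assms(3) by (intro ext) (metis norm_le_zero_iff)

lemma
  fixes x :: "nat \<Rightarrow> 'a::real_normed_field"
  assumes "p > 0" "x \<in> lp_space p"
  shows lp_space_scale: "(\<lambda>i. c * x i) \<in> lp_space p"
    and lp_norm_scale: "lp_norm p (\<lambda>i. c * x i) = norm c * lp_norm p x"
proof -
  have eq: "(\<lambda>k. norm (c * x k) powr p) = (\<lambda>k. norm c powr p * norm (x k) powr p)"
    by (simp add: norm_mult powr_mult)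
  show "(\<lambda>i. c * x i) \<in> lp_space p"
    using summable_mult[OF lp_spaceD[OF assms(2)], of "norm c powr p"] eq by (simp add: lp_space_def)
  have "lp_norm p (\<lambda>i. c * x i) = (norm c powr p * (\<Sum>k. norm (x k) powr p)) powr (1 / p)"
    unfolding lp_norm_def eq using suminf_mult[OF lp_spaceD[OF assms(2)]] by simp
  also have "\<dots> = norm c * lp_norm p x"
    using assms lp_powr_sum_nonneg[OF assms(2)] by (simp add: powr_mult powr_powr lp_norm_def)
  finally show "lp_norm p (\<lambda>i. c * x i) = norm c * lp_norm p x" .
qed

(* A crude constant, but uniform in p > 0: for p < 1 the triangle inequality itself fails. *)
lemma
  fixes x y :: "nat \<Rightarrow> 'a::real_normed_field"
  assumes p: "p > 0" and x: "x \<in> lp_space p" and y: "y \<in> lp_space p"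
  shows lp_space_add: "(\<lambda>i. x i + y i) \<in> lp_space p"
    and lp_norm_add_le: "lp_norm p (\<lambda>i. x i + y i) \<le> 2 * 2 powr (1 / p) * (lp_norm p x + lp_norm p y)"
proof -
  define X where "X = (\<Sum>k. norm (x k) powr p)"
  define Y where "Y = (\<Sum>k. norm (y k) powr p)"
  have sx: "summable (\<lambda>k. norm (x k) powr p)" and sy: "summable (\<lambda>k. norm (y k) powr p)"
    using x y by (auto dest: lp_spaceD)
  have pt: "norm (x k + y k) powr p \<le> 2 powr p * (norm (x k) powr p + norm (y k) powr p)" for k
  proof -
    have "norm (x k + y k) powr p \<le> (norm (x k) + norm (y k)) powr p"
      using p by (intro powr_mono2 norm_triangle_ineq) auto
    also have "\<dots> \<le> 2 powr p * (norm (x k) powr p + norm (y k) powr p)"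
      using p by (intro powr_add_le_two_powr) auto
    finally show ?thesis .
  qed
  have sxy: "summable (\<lambda>k. 2 powr p * (norm (x k) powr p + norm (y k) powr p))"
    by (intro summable_mult summable_add sx sy)
  have s: "summable (\<lambda>k. norm (x k + y k) powr p)"
    by (rule summable_comparison_test'[OF sxy]) (use pt in auto)
  thus xy: "(\<lambda>i. x i + y i) \<in> lp_space p"
    by (simp add: lp_space_def)
  have "(\<Sum>k. norm (x k + y k) powr p) \<le> (\<Sum>k. 2 powr p * (norm (x k) powr p + norm (y k) powr p))"
    by (intro suminf_le pt s sxy)
  also have "\<dots> = 2 powr p * (X + Y)"
    by (simp add: X_def Y_def suminf_mult suminf_add sx sy summable_add)
  also have "\<dots> = (2 * (X + Y) powr (1 / p)) powr p"
    using p lp_powr_sum_nonneg[OF x] lp_powr_sum_nonneg[OF y]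
    by (simp add: X_def Y_def powr_mult powr_powr)
  finally have "lp_norm p (\<lambda>i. x i + y i) \<le> 2 * (X + Y) powr (1 / p)"
    using p xy lp_powr_sum_nonneg[OF x] lp_powr_sum_nonneg[OF y]
    by (intro lp_norm_le_if_powr_sum_le) (auto simp: X_def Y_def)
  also have "(X + Y) powr (1 / p) \<le> 2 powr (1 / p) * (lp_norm p x + lp_norm p y)"
    unfolding X_def Y_def lp_norm_def
    using p lp_powr_sum_nonneg[OF x] lp_powr_sum_nonneg[OF y] by (intro powr_add_le_two_powr) auto
  finally show "lp_norm p (\<lambda>i. x i + y i) \<le> 2 * 2 powr (1 / p) * (lp_norm p x + lp_norm p y)"
    by simp
qed

lemma
  fixes x :: "nat \<Rightarrow> 'a::real_normed_field"
  assumes p: "p > 0" and x: "x \<in> lp_space p"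
  shows lp_space_tail: "(\<lambda>k. if n \<le> k then x k else 0) \<in> lp_space p"
    and lp_norm_tail: "lp_norm p (\<lambda>k. if n \<le> k then x k else 0) =
      ((\<Sum>k. norm (x k) powr p) - (\<Sum>k<n. norm (x k) powr p)) powr (1 / p)"
proof -
  define f where "f = (\<lambda>k. norm (x k) powr p)"
  define g where "g k = norm (if n \<le> k then x k else 0) powr p" for k
  have "(\<lambda>i. g (i + n)) sums (suminf f - (\<Sum>k<n. f k))"
    using sums_split_initial_segment[OF summable_sums[OF lp_spaceD[OF x]], of n]
    by (simp add: f_def g_def)
  moreover have "(\<Sum>k<n. g k) = 0"
    by (simp add: g_def)
  ultimately have "g sums (suminf f - (\<Sum>k<n. f k))"
    using sums_iff_shift[of g n] by simp
  thus "(\<lambda>k. if n \<le> k then x k else 0) \<in> lp_space p"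
    and "lp_norm p (\<lambda>k. if n \<le> k then x k else 0) =
      ((\<Sum>k. norm (x k) powr p) - (\<Sum>k<n. norm (x k) powr p)) powr (1 / p)"
    unfolding lp_space_def lp_norm_def g_def f_def by (auto simp: sums_iff)
qed

lemma lp_norm_tail_tendsto_0:
  assumes p: "p > 0" and x: "x \<in> lp_space p"
  shows "(\<lambda>n. lp_norm p (\<lambda>k. if n \<le> k then x k else 0)) \<longlonglongrightarrow> 0"
proof -
  have s: "summable (\<lambda>k. norm (x k) powr p)"
    using x by (rule lp_spaceD)
  have lim: "(\<lambda>n. (\<Sum>k. norm (x k) powr p) - (\<Sum>k<n. norm (x k) powr p)) \<longlonglongrightarrow> 0"
    using tendsto_diff[OF tendsto_const[of "\<Sum>k. norm (x k) powr p"] summable_LIMSEQ[OF s]] by simp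
  have "(\<Sum>k. norm (x k) powr p) - (\<Sum>k<n. norm (x k) powr p) \<ge> 0" for n
    using sum_le_suminf[OF s, of "{..<n}"] by simp
  thus ?thesis
    unfolding lp_norm_tail[OF p x] using p
    by (intro tendsto_zero_powrI[OF lim tendsto_const] always_eventually) auto
qed

lemma summable_reindex_product_le:
  fixes f g :: "nat \<Rightarrow> real" and \<phi> :: "nat \<Rightarrow> nat \<times> nat"
  assumes inj: "inj \<phi>" and f: "\<And>k. f k \<ge> 0" "summable f" and g: "\<And>i. g i \<ge> 0" "summable g"
  shows "summable (\<lambda>m. f (fst (\<phi> m)) * g (snd (\<phi> m)))"
    and "(\<Sum>m. f (fst (\<phi> m)) * g (snd (\<phi> m))) \<le> suminf f * suminf g"
proof -
  define G where "G = (\<lambda>(k, i). f k * g i)"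
  have partial: "(\<Sum>m<M. f (fst (\<phi> m)) * g (snd (\<phi> m))) \<le> suminf f * suminf g" for M
  proof -
    define A where "A = \<phi> ` {..<M}"
    have "(\<Sum>m<M. f (fst (\<phi> m)) * g (snd (\<phi> m))) = sum G A"
      unfolding A_def by (simp add: sum.reindex inj_on_subset[OF inj] G_def case_prod_beta)
    also have "\<dots> \<le> sum G (fst ` A \<times> snd ` A)"
      using f g subset_fst_snd[of A] by (intro sum_mono2) (auto simp: A_def G_def)
    also have "\<dots> = sum f (fst ` A) * sum g (snd ` A)"
      unfolding G_def sum_product sum.cartesian_product by simp
    also have "\<dots> \<le> suminf f * suminf g"
      using f g by (intro mult_mono sum_le_suminf suminf_nonneg sum_nonneg) (auto simp: A_def)
    finally show ?thesis .
  qed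
  show s: "summable (\<lambda>m. f (fst (\<phi> m)) * g (snd (\<phi> m)))"
    using f g partial by (intro summableI_nonneg_bounded) auto
  show "(\<Sum>m. f (fst (\<phi> m)) * g (snd (\<phi> m))) \<le> suminf f * suminf g"
    by (rule suminf_le_const[OF s partial])
qed

lemma
  assumes "bounded_lp_op p f"
  shows bounded_lp_op_lp_space: "x \<in> lp_space p \<Longrightarrow> f x \<in> lp_space p"
    and bounded_lp_op_add: "x \<in> lp_space p \<Longrightarrow> y \<in> lp_space p \<Longrightarrow>
      f (\<lambda>i. x i + y i) = (\<lambda>i. f x i + f y i)"
    and bounded_lp_op_scale: "x \<in> lp_space p \<Longrightarrow> f (\<lambda>i. c * x i) = (\<lambda>i. c * f x i)"
  using assms unfolding bounded_lp_op_def by blast+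

lemma bounded_lp_op_bound:
  assumes "bounded_lp_op p f"
  obtains C where "C \<ge> 0" "\<And>x. x \<in> lp_space p \<Longrightarrow> lp_norm p (f x) \<le> C * lp_norm p x"
proof -
  obtain C where C: "\<And>x. x \<in> lp_space p \<Longrightarrow> lp_norm p (f x) \<le> C * lp_norm p x"
    using assms unfolding bounded_lp_op_def by blast
  have "lp_norm p (f x) \<le> max C 0 * lp_norm p x" if "x \<in> lp_space p" for x
    by (rule order_trans[OF C[OF that] mult_right_mono[OF max.cobounded1 lp_norm_nonneg]])
  thus ?thesis using that[of "max C 0"] by auto
qed

lemma bounded_lp_op_zero: "bounded_lp_op p (\<lambda>x i. 0)"
  unfolding bounded_lp_op_def using zero_in_lp_space by (auto simp: lp_norm_zero intro!: exI[of _ 0])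

lemma bounded_lp_op_lincomb:
  assumes p: "p > 0" and f: "bounded_lp_op p f" and g: "bounded_lp_op p g"
  shows "bounded_lp_op p (\<lambda>x i. c * f x i + g x i)"
proof -
  obtain Cf where Cf: "\<And>x. x \<in> lp_space p \<Longrightarrow> lp_norm p (f x) \<le> Cf * lp_norm p x"
    using bounded_lp_op_bound[OF f] by blast
  obtain Cg where Cg: "\<And>x. x \<in> lp_space p \<Longrightarrow> lp_norm p (g x) \<le> Cg * lp_norm p x"
    using bounded_lp_op_bound[OF g] by blast
  have mem: "(\<lambda>i. c * f x i + g x i) \<in> lp_space p" if "x \<in> lp_space p" for x
    using that by (intro lp_space_add lp_space_scale bounded_lp_op_lp_space[OF f]
        bounded_lp_op_lp_space[OF g] p)
  have "lp_norm p (\<lambda>i. c * f x i + g x i) \<le> 2 * 2 powr (1 / p) * (norm c * Cf + Cg) * lp_norm p x"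
    if x: "x \<in> lp_space p" for x
  proof -
    have "lp_norm p (\<lambda>i. c * f x i + g x i) \<le>
        2 * 2 powr (1 / p) * (norm c * lp_norm p (f x) + lp_norm p (g x))"
      using lp_norm_add_le[OF p lp_space_scale[OF p bounded_lp_op_lp_space[OF f x]]
          bounded_lp_op_lp_space[OF g x]]
      by (simp add: lp_norm_scale[OF p bounded_lp_op_lp_space[OF f x]])
    also have "\<dots> \<le> 2 * 2 powr (1 / p) * (norm c * (Cf * lp_norm p x) + Cg * lp_norm p x)"
      using Cf[OF x] Cg[OF x] by (intro mult_left_mono add_mono) auto
    finally show ?thesis by (simp add: algebra_simps)
  qed
  moreover have "(\<lambda>i. c * f (\<lambda>i. x i + y i) i + g (\<lambda>i. x i + y i) i) =
      (\<lambda>i. (c * f x i + g x i) + (c * f y i + g y i))"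
    if "x \<in> lp_space p" "y \<in> lp_space p" for x y
    using that by (simp add: bounded_lp_op_add[OF f] bounded_lp_op_add[OF g] algebra_simps)
  moreover have "(\<lambda>i. c * f (\<lambda>i. d * x i) i + g (\<lambda>i. d * x i) i) = (\<lambda>i. d * (c * f x i + g x i))"
    if "x \<in> lp_space p" for x d
    using that by (simp add: bounded_lp_op_scale[OF f] bounded_lp_op_scale[OF g] algebra_simps)
  ultimately show ?thesis
    unfolding bounded_lp_op_def using mem by blast
qed

lemma bounded_lp_op_diff:
  assumes "p > 0" "bounded_lp_op p f" "bounded_lp_op p g"
  shows "bounded_lp_op p (\<lambda>x i. f x i - g x i)"
  using bounded_lp_op_lincomb[OF assms(1,3,2), of "-1"] by simp

lemma bounded_lp_op_partial_sum:
  fixes v :: "nat \<Rightarrow> (nat \<Rightarrow> 'a::real_normed_field) \<Rightarrow> (nat \<Rightarrow> 'a)"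
  assumes "p > 0" "\<And>k. bounded_lp_op p (v k)"
  shows "bounded_lp_op p (\<lambda>x i. \<Sum>k<n. a k * v k x i)"
proof (induction n)
  case 0
  show ?case using bounded_lp_op_zero by simp
next
  case (Suc n)
  show ?case
    using bounded_lp_op_lincomb[OF assms(1,2) Suc, of "a n"] by (simp add: add.commute)
qed

lemma lp_norm_le_lp_op_norm:
  assumes f: "bounded_lp_op p f" and x: "x \<in> lp_space p" "lp_norm p x \<le> 1"
  shows "lp_norm p (f x) \<le> lp_op_norm p f"
proof -
  obtain C where C: "C \<ge> 0" "\<And>x. x \<in> lp_space p \<Longrightarrow> lp_norm p (f x) \<le> C * lp_norm p x"
    using bounded_lp_op_bound[OF f] by blast
  have "lp_norm p (f y) \<le> C" if "y \<in> lp_space p" "lp_norm p y \<le> 1" for y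
    using C(2)[OF that(1)] mult_left_le[OF that(2) C(1)] by linarith
  hence "bdd_above ((\<lambda>x. lp_norm p (f x)) ` {x \<in> lp_space p. lp_norm p x \<le> 1})"
    by (intro bdd_aboveI2) auto
  thus ?thesis
    unfolding lp_op_norm_def using x by (intro cSup_upper) auto
qed

lemma lp_op_norm_le:
  assumes "p > 0" "\<And>x. x \<in> lp_space p \<Longrightarrow> lp_norm p x \<le> 1 \<Longrightarrow> lp_norm p (f x) \<le> B"
  shows "lp_op_norm p f \<le> B"
proof -
  have "(\<lambda>_. 0) \<in> {x \<in> lp_space p. lp_norm p x \<le> 1}"
    using zero_in_lp_space by (simp add: lp_norm_zero)
  thus ?thesis
    unfolding lp_op_norm_def using assms(2) by (intro cSup_least) auto
qed

lemma lp_op_norm_nonneg: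
  assumes "p > 0" "bounded_lp_op p f"
  shows "lp_op_norm p f \<ge> 0"
proof -
  have "lp_norm p (f (\<lambda>_. 0)) \<le> lp_op_norm p f"
    by (rule lp_norm_le_lp_op_norm[OF assms(2) zero_in_lp_space]) (simp add: lp_norm_zero)
  thus ?thesis using lp_norm_nonneg[of p "f (\<lambda>_. 0)"] by linarith
qed

lemma lp_norm_le_lp_op_norm_mult:
  fixes f :: "(nat \<Rightarrow> 'a::real_normed_field) \<Rightarrow> (nat \<Rightarrow> 'a)"
  assumes p: "p > 0" and f: "bounded_lp_op p f" and x: "x \<in> lp_space p"
  shows "lp_norm p (f x) \<le> lp_op_norm p f * lp_norm p x"
proof (cases "lp_norm p x = 0")
  case True
  hence "x = (\<lambda>i. 0 * x i)"
    using lp_norm_eq_0_imp_zero[OF p x] by simp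
  hence "f x = (\<lambda>_. 0)"
    using bounded_lp_op_scale[OF f x, of 0] by simp
  thus ?thesis using True by (simp add: lp_norm_zero)
next
  case False
  hence nx: "lp_norm p x > 0"
    using lp_norm_nonneg[of p x] by simp
  define c :: 'a where "c = of_real (1 / lp_norm p x)"
  have nc: "norm c = 1 / lp_norm p x"
    unfolding c_def norm_of_real using nx by simp
  have "norm c * lp_norm p (f x) = lp_norm p (f (\<lambda>i. c * x i))"
    using lp_norm_scale[OF p bounded_lp_op_lp_space[OF f x]] bounded_lp_op_scale[OF f x] by simp
  also have "\<dots> \<le> lp_op_norm p f"
    using nx by (intro lp_norm_le_lp_op_norm[OF f] lp_space_scale[OF p x])
      (simp add: lp_norm_scale[OF p x] nc)
  finally show ?thesis
    using nx by (simp add: nc field_simps)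
qed

lemma lp_op_norm_lincomb_le:
  fixes f g :: "(nat \<Rightarrow> 'a::real_normed_field) \<Rightarrow> (nat \<Rightarrow> 'a)"
  assumes p: "p > 0" and f: "bounded_lp_op p f" and g: "bounded_lp_op p g"
  shows "lp_op_norm p (\<lambda>x i. c * f x i + g x i) \<le>
    2 * 2 powr (1 / p) * (norm c * lp_op_norm p f + lp_op_norm p g)"
proof (rule lp_op_norm_le[OF p])
  fix x :: "nat \<Rightarrow> 'a" assume x: "x \<in> lp_space p" "lp_norm p x \<le> 1"
  have fx: "f x \<in> lp_space p" and gx: "g x \<in> lp_space p"
    using x by (auto intro: bounded_lp_op_lp_space f g)
  have "lp_norm p (\<lambda>i. c * f x i + g x i) \<le>
      2 * 2 powr (1 / p) * (norm c * lp_norm p (f x) + lp_norm p (g x))"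
    using lp_norm_add_le[OF p lp_space_scale[OF p fx] gx] by (simp add: lp_norm_scale[OF p fx])
  also have "\<dots> \<le> 2 * 2 powr (1 / p) * (norm c * lp_op_norm p f + lp_op_norm p g)"
    using lp_norm_le_lp_op_norm[OF f x] lp_norm_le_lp_op_norm[OF g x]
    by (intro mult_left_mono add_mono) auto
  finally show "lp_norm p (\<lambda>i. c * f x i + g x i) \<le>
      2 * 2 powr (1 / p) * (norm c * lp_op_norm p f + lp_op_norm p g)" .
qed

context
  fixes p :: real and v :: "nat \<Rightarrow> (nat \<Rightarrow> 'a::real_normed_field) \<Rightarrow> (nat \<Rightarrow> 'a)"
  assumes p: "p > 0" and v: "\<And>k. bounded_lp_op p (v k)"
begin

lemma op_series_sums_remainder:
  assumes "op_series_sums p a v S"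
  shows "bounded_lp_op p (\<lambda>x i. S x i - (\<Sum>k<n. a k * v k x i))"
  using assms unfolding op_series_sums_def
  by (intro bounded_lp_op_diff bounded_lp_op_partial_sum p v) simp_all

lemma op_series_sums_pointwise:
  assumes S: "op_series_sums p a v S" and x: "x \<in> lp_space p"
  shows "(\<lambda>n. \<Sum>k<n. a k * v k x m) \<longlonglongrightarrow> S x m"
proof -
  define R where "R n = (\<lambda>x i. S x i - (\<Sum>k<n. a k * v k x i))" for n
  have R: "bounded_lp_op p (R n)" for n
    unfolding R_def by (rule op_series_sums_remainder[OF S])
  have lim: "(\<lambda>n. lp_op_norm p (R n)) \<longlonglongrightarrow> 0"
    using S unfolding op_series_sums_def R_def by simp
  have "norm (R n x m) \<le> lp_op_norm p (R n) * lp_norm p x" for n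
    by (rule order_trans[OF norm_le_lp_norm[OF p bounded_lp_op_lp_space[OF R x]]
          lp_norm_le_lp_op_norm_mult[OF p R x]])
  hence "(\<lambda>n. R n x m) \<longlonglongrightarrow> 0"
    by (intro Lim_null_comparison[OF always_eventually tendsto_mult_left_zero[OF lim]]) auto
  hence "(\<lambda>n. S x m - R n x m) \<longlonglongrightarrow> S x m - 0"
    by (intro tendsto_diff tendsto_const)
  thus ?thesis by (simp add: R_def)
qed

lemma op_series_sums_unique:
  assumes "op_series_sums p a v S" "op_series_sums p a v S'" "x \<in> lp_space p"
  shows "S x = S' x"
proof
  fix m
  show "S x m = S' x m"
    using LIMSEQ_unique[OF op_series_sums_pointwise[OF assms(1,3)] op_series_sums_pointwise[OF assms(2,3)]] .
qed

lemma op_series_sums_lincomb: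
  assumes S: "op_series_sums p a v S" and S': "op_series_sums p b v S'"
  shows "op_series_sums p (\<lambda>k. c * a k + b k) v (\<lambda>x i. c * S x i + S' x i)"
proof -
  define Ra where "Ra n = (\<lambda>x i. S x i - (\<Sum>k<n. a k * v k x i))" for n
  define Rb where "Rb n = (\<lambda>x i. S' x i - (\<Sum>k<n. b k * v k x i))" for n
  have bRa: "bounded_lp_op p (Ra n)" and bRb: "bounded_lp_op p (Rb n)" for n
    unfolding Ra_def Rb_def by (intro op_series_sums_remainder S S')+
  have limA: "(\<lambda>n. lp_op_norm p (Ra n)) \<longlonglongrightarrow> 0" and limB: "(\<lambda>n. lp_op_norm p (Rb n)) \<longlonglongrightarrow> 0"
    using S S' unfolding op_series_sums_def Ra_def Rb_def by simp_all
  have remainder: "(\<lambda>x i. (c * S x i + S' x i) - (\<Sum>k<n. (c * a k + b k) * v k x i)) =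
      (\<lambda>x i. c * Ra n x i + Rb n x i)" for n
    unfolding Ra_def Rb_def by (intro ext) (simp add: algebra_simps sum.distrib sum_distrib_left)
  define K where "K = 2 * 2 powr (1 / p)"
  have bound: "norm (lp_op_norm p (\<lambda>x i. c * Ra n x i + Rb n x i)) \<le>
      K * (norm c * lp_op_norm p (Ra n) + lp_op_norm p (Rb n))" for n
    using lp_op_norm_lincomb_le[OF p bRa bRb, of c n]
      lp_op_norm_nonneg[OF p bounded_lp_op_lincomb[OF p bRa bRb, of c n]]
    by (simp add: K_def)
  have "(\<lambda>n. K * (norm c * lp_op_norm p (Ra n) + lp_op_norm p (Rb n))) \<longlonglongrightarrow> 0"
    using tendsto_mult_right_zero[OF tendsto_add_zero[OF tendsto_mult_right_zero[OF limA] limB]] .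
  hence "(\<lambda>n. lp_op_norm p (\<lambda>x i. c * Ra n x i + Rb n x i)) \<longlonglongrightarrow> 0"
    by (rule Lim_null_comparison[OF always_eventually, rotated]) (use bound in blast)
  moreover have "bounded_lp_op p (\<lambda>x i. c * S x i + S' x i)"
    using S S' unfolding op_series_sums_def by (intro bounded_lp_op_lincomb p) simp_all
  ultimately show ?thesis
    unfolding op_series_sums_def remainder by simp
qed

end

locale block_copies =
  fixes p :: real
    and u :: "(nat \<Rightarrow> 'a::real_normed_field) \<Rightarrow> (nat \<Rightarrow> 'a)"
    and N :: "nat \<Rightarrow> nat set"
    and uk :: "nat \<Rightarrow> (nat \<Rightarrow> 'a) \<Rightarrow> (nat \<Rightarrow> 'a)"
  assumes p_pos: "p > 0"
    and u_op: "bounded_lp_op p u"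
    and N_inf: "\<And>k. infinite (N k)"
    and N_disj: "\<And>k j. k \<noteq> j \<Longrightarrow> N k \<inter> N j = {}"
    and N_cover: "(\<Union>k. N k) = UNIV"
    and uk_on: "\<And>k x i. uk k x (enumerate (N k) i) = u x i"
    and uk_off: "\<And>k x m. m \<notin> N k \<Longrightarrow> uk k x m = 0"
begin

definition block_of :: "nat \<Rightarrow> nat" where
  "block_of m = (SOME k. m \<in> N k)"

definition block_pos :: "nat \<Rightarrow> nat" where
  "block_pos m = (SOME i. enumerate (N (block_of m)) i = m)"

lemma block_of_mem: "m \<in> N (block_of m)"
proof -
  have "\<exists>k. m \<in> N k"
    using N_cover by auto
  thus ?thesis
    unfolding block_of_def by (rule someI_ex)
qed

lemma block_of_eqI: "m \<in> N k \<Longrightarrow> block_of m = k"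
  using block_of_mem[of m] N_disj[of k "block_of m"] by blast

lemma enumerate_block_pos: "enumerate (N (block_of m)) (block_pos m) = m"
  unfolding block_pos_def by (rule someI_ex[OF enumerate_Ex[OF N_inf block_of_mem]])

lemma block_pos_enumerate: "block_pos (enumerate (N k) i) = i"
proof -
  have k: "block_of (enumerate (N k) i) = k"
    by (intro block_of_eqI enumerate_in_set N_inf)
  have "enumerate (N k) (block_pos (enumerate (N k) i)) = enumerate (N k) i"
    using enumerate_block_pos[of "enumerate (N k) i"] unfolding k .
  thus ?thesis
    by (rule injD[OF inj_enumerate[OF N_inf]])
qed

lemma inj_block_coords: "inj (\<lambda>m. (block_of m, block_pos m))"
proof (rule injI)
  fix m m' assume "(block_of m, block_pos m) = (block_of m', block_pos m')"
  hence "enumerate (N (block_of m)) (block_pos m) = enumerate (N (block_of m')) (block_pos m')"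
    by simp
  thus "m = m'"
    by (simp only: enumerate_block_pos)
qed

lemma uk_eq: "uk k x m = (if block_of m = k then u x (block_pos m) else 0)"
proof (cases "block_of m = k")
  case True
  thus ?thesis
    using uk_on[of k x "block_pos m"] enumerate_block_pos[of m] by simp
next
  case False
  thus ?thesis
    using uk_off[of m k x] block_of_eqI[of m k] by auto
qed

lemma partial_sum_uk:
  "(\<Sum>k<n. a k * uk k x m) = (if block_of m < n then a (block_of m) * u x (block_pos m) else 0)"
proof -
  have "(\<Sum>k<n. a k * uk k x m) =
      (\<Sum>k<n. if k = block_of m then a (block_of m) * u x (block_pos m) else 0)"
    by (intro sum.cong) (auto simp: uk_eq)
  thus ?thesis by simp
qed

(* block_sum b is the operator \<Sum>k. b k \<cdot> uk k, evaluated coordinatewise by partial_sum_uk. *)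
definition block_sum :: "(nat \<Rightarrow> 'a) \<Rightarrow> (nat \<Rightarrow> 'a) \<Rightarrow> (nat \<Rightarrow> 'a)" where
  "block_sum b x = (\<lambda>m. b (block_of m) * u x (block_pos m))"

lemma
  assumes b: "b \<in> lp_space p" and x: "x \<in> lp_space p"
  shows lp_space_block_sum: "block_sum b x \<in> lp_space p"
    and lp_norm_block_sum_le: "lp_norm p (block_sum b x) \<le> lp_norm p b * lp_norm p (u x)"
proof -
  have ux: "u x \<in> lp_space p"
    by (rule bounded_lp_op_lp_space[OF u_op x])
  have eq: "norm (block_sum b x m) powr p = norm (b (block_of m)) powr p * norm (u x (block_pos m)) powr p"
    for m by (simp add: block_sum_def norm_mult powr_mult)
  note prod = summable_reindex_product_le[OF inj_block_coords _ lp_spaceD[OF b] _ lp_spaceD[OF ux],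
      simplified]
  show s: "block_sum b x \<in> lp_space p"
    using prod(1) by (simp add: lp_space_def eq)
  have "(\<Sum>m. norm (block_sum b x m) powr p) \<le> (lp_norm p b * lp_norm p (u x)) powr p"
    using prod(2) p_pos
    by (simp add: eq powr_mult lp_norm_powr[OF p_pos b] lp_norm_powr[OF p_pos ux])
  thus "lp_norm p (block_sum b x) \<le> lp_norm p b * lp_norm p (u x)"
    using p_pos s lp_norm_nonneg[of p b] lp_norm_nonneg[of p "u x"]
    by (intro lp_norm_le_if_powr_sum_le) auto
qed

lemma bounded_lp_op_block_sum:
  assumes b: "b \<in> lp_space p"
  shows "bounded_lp_op p (block_sum b)"
proof -
  obtain C where C: "\<And>x. x \<in> lp_space p \<Longrightarrow> lp_norm p (u x) \<le> C * lp_norm p x"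
    using bounded_lp_op_bound[OF u_op] by blast
  show ?thesis
    unfolding bounded_lp_op_def
  proof (intro conjI ballI allI exI)
    fix x :: "nat \<Rightarrow> 'a" assume x: "x \<in> lp_space p"
    show "block_sum b x \<in> lp_space p"
      by (rule lp_space_block_sum[OF b x])
    show "lp_norm p (block_sum b x) \<le> (lp_norm p b * C) * lp_norm p x"
      using lp_norm_block_sum_le[OF b x] mult_left_mono[OF C[OF x] lp_norm_nonneg[of p b]]
      by (simp add: mult.assoc)
    show "block_sum b (\<lambda>i. c * x i) = (\<lambda>i. c * block_sum b x i)" for c
      using x by (simp add: block_sum_def bounded_lp_op_scale[OF u_op] mult.left_commute)
    fix y :: "nat \<Rightarrow> 'a" assume y: "y \<in> lp_space p"
    show "block_sum b (\<lambda>i. x i + y i) = (\<lambda>i. block_sum b x i + block_sum b y i)"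
      using x y by (simp add: block_sum_def bounded_lp_op_add[OF u_op] distrib_left)
  qed
qed

lemma lp_op_norm_block_sum_le:
  assumes b: "b \<in> lp_space p"
  shows "lp_op_norm p (block_sum b) \<le> lp_norm p b * lp_op_norm p u"
proof (rule lp_op_norm_le[OF p_pos])
  fix x :: "nat \<Rightarrow> 'a" assume x: "x \<in> lp_space p" "lp_norm p x \<le> 1"
  have "lp_norm p (block_sum b x) \<le> lp_norm p b * lp_norm p (u x)"
    by (rule lp_norm_block_sum_le[OF b x(1)])
  also have "\<dots> \<le> lp_norm p b * lp_op_norm p u"
    by (intro mult_left_mono lp_norm_le_lp_op_norm[OF u_op x] lp_norm_nonneg)
  finally show "lp_norm p (block_sum b x) \<le> lp_norm p b * lp_op_norm p u" .
qed

lemma bounded_lp_op_uk: "bounded_lp_op p (uk k)"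
proof -
  define e :: "nat \<Rightarrow> 'a" where "e = (\<lambda>j. if j = k then 1 else 0)"
  have "summable (\<lambda>j. norm (e j) powr p)"
    by (rule summable_finite[of "{k}"]) (auto simp: e_def)
  hence "e \<in> lp_space p"
    by (simp add: lp_space_def)
  moreover have "uk k = block_sum e"
    by (intro ext) (simp add: uk_eq block_sum_def e_def)
  ultimately show ?thesis
    by (simp add: bounded_lp_op_block_sum)
qed

lemma op_series_sums_block_sum:
  assumes a: "a \<in> lp_space p"
  shows "op_series_sums p a uk (block_sum a)"
proof -
  define t where "t n = (\<lambda>k. if n \<le> k then a k else 0)" for n
  have t: "t n \<in> lp_space p" for n
    unfolding t_def by (rule lp_space_tail[OF p_pos a])
  have remainder: "(\<lambda>x i. block_sum a x i - (\<Sum>k<n. a k * uk k x i)) = block_sum (t n)" for n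
    by (intro ext) (simp add: partial_sum_uk block_sum_def t_def not_less)
  have bound: "norm (lp_op_norm p (block_sum (t n))) \<le> lp_norm p (t n) * lp_op_norm p u" for n
    using lp_op_norm_block_sum_le[OF t] lp_op_norm_nonneg[OF p_pos bounded_lp_op_block_sum[OF t]]
    by simp
  have "(\<lambda>n. lp_norm p (t n) * lp_op_norm p u) \<longlonglongrightarrow> 0"
    unfolding t_def by (intro tendsto_mult_left_zero lp_norm_tail_tendsto_0 p_pos a)
  hence "(\<lambda>n. lp_op_norm p (block_sum (t n))) \<longlonglongrightarrow> 0"
    by (rule Lim_null_comparison[OF always_eventually, rotated]) (use bound in blast)
  thus ?thesis
    unfolding op_series_sums_def remainder using bounded_lp_op_block_sum[OF a] by simp
qed

lemma op_series_sums_uk_apply: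
  assumes S: "op_series_sums p a uk S" and x: "x \<in> lp_space p"
  shows "S x (enumerate (N k) i) = a k * u x i"
proof -
  define m where "m = enumerate (N k) i"
  have m: "block_of m = k" "block_pos m = i"
    unfolding m_def by (rule block_of_eqI[OF enumerate_in_set[OF N_inf]], rule block_pos_enumerate)
  have "(\<lambda>n. \<Sum>j<n. a j * uk j x m) \<longlonglongrightarrow> a k * u x i"
    unfolding partial_sum_uk m
    by (intro tendsto_eventually eventually_sequentiallyI[of "Suc k"]) auto
  thus ?thesis
    using LIMSEQ_unique[OF op_series_sums_pointwise[OF p_pos bounded_lp_op_uk S x]]
    by (simp add: m_def)
qed

lemma op_series_sums_inj:
  assumes u_nz: "\<exists>x \<in> lp_space p. u x \<noteq> (\<lambda>_. 0)"
    and S: "op_series_sums p a uk S" and S': "op_series_sums p b uk S'"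
    and eq: "\<forall>x \<in> lp_space p. S x = S' x"
  shows "a = b"
proof
  fix k
  obtain x i where x: "x \<in> lp_space p" and ui: "u x i \<noteq> 0"
    using u_nz by fast
  have "a k * u x i = b k * u x i"
    using op_series_sums_uk_apply[OF S x] op_series_sums_uk_apply[OF S' x] eq x by metis
  thus "a k = b k"
    using ui by simp
qed

end

theorem lemma2p1:
  fixes p :: real
    and u :: "(nat \<Rightarrow> 'a::real_normed_field) \<Rightarrow> (nat \<Rightarrow> 'a)"
    and N :: "nat \<Rightarrow> nat set"
    and uk :: "nat \<Rightarrow> (nat \<Rightarrow> 'a) \<Rightarrow> (nat \<Rightarrow> 'a)"
  assumes p_pos: "p > 0"
    and u_op: "bounded_lp_op p u"
    and u_nz: "\<exists>x \<in> lp_space p. u x \<noteq> (\<lambda>_. 0)"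
    and N_inf: "\<And>k. infinite (N k)"
    and N_disj: "\<And>k j. k \<noteq> j \<Longrightarrow> N k \<inter> N j = {}"
    and N_cover: "(\<Union>k. N k) = UNIV"
    and uk_on: "\<And>k x i. uk k x (enumerate (N k) i) = u x i"
    and uk_off: "\<And>k x m. m \<notin> N k \<Longrightarrow> uk k x m = 0"
  shows
    "(\<forall>a \<in> lp_space p. \<exists>S. op_series_sums p a uk S)
   \<and> (\<forall>a S S'. op_series_sums p a uk S \<longrightarrow> op_series_sums p a uk S'
          \<longrightarrow> (\<forall>x \<in> lp_space p. S x = S' x))
   \<and> (\<forall>a b S S' c. a \<in> lp_space p \<longrightarrow> b \<in> lp_space p
          \<longrightarrow> op_series_sums p a uk S \<longrightarrow> op_series_sums p b uk S'
          \<longrightarrow> op_series_sums p (\<lambda>k. c * a k + b k) uk (\<lambda>x i. c * S x i + S' x i))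
   \<and> (\<forall>a b S S'. a \<in> lp_space p \<longrightarrow> b \<in> lp_space p
          \<longrightarrow> op_series_sums p a uk S \<longrightarrow> op_series_sums p b uk S'
          \<longrightarrow> (\<forall>x \<in> lp_space p. S x = S' x) \<longrightarrow> a = b)"
proof -
  interpret block_copies p u N uk
    using p_pos u_op N_inf N_disj N_cover uk_on uk_off by unfold_locales
  show ?thesis
  proof (intro conjI allI ballI impI)
    show "\<exists>S. op_series_sums p a uk S" if "a \<in> lp_space p" for a
      using op_series_sums_block_sum[OF that] by blast
    show "S x = S' x" if "op_series_sums p a uk S" "op_series_sums p a uk S'" "x \<in> lp_space p"
      for a S S' x
      using op_series_sums_unique[OF p_pos bounded_lp_op_uk that] .
    show "op_series_sums p (\<lambda>k. c * a k + b k) uk (\<lambda>x i. c * S x i + S' x i)"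
      if "op_series_sums p a uk S" "op_series_sums p b uk S'" for a b S S' c
      using op_series_sums_lincomb[OF p_pos bounded_lp_op_uk that] .
    show "a = b" if "op_series_sums p a uk S" "op_series_sums p b uk S'"
      "\<forall>x \<in> lp_space p. S x = S' x" for a b S S'
      using op_series_sums_inj[OF u_nz that] .
  qed
qed

end
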